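(* For every finite multiset $\Gamma$ of ILL formulae and ILL formula $\varphi$: the sequent $(\Gamma:\varphi)$ is valid if and only if $\Gamma\Vdash^{\varnothing}_{\varnothing}\varphi$, where the subscript $\varnothing$ is the empty base.
   Context: Fix a set $\mathbb{A}$ of propositional atoms. ILL formulae: $\phi ::= p\in\mathbb{A} \mid \top \mid 0 \mid 1 \mid \phi\multimap\phi \mid \phi\otimes\phi \mid \phi\,\&\,\phi \mid \phi\oplus\phi \mid\ !\phi$. All multisets are finite; "$\Gamma,\Delta$" denotes multiset union. Atomic rules and bases: an atomic sequent is $P\Rightarrow p$ with $P$ a multiset of atoms, $p$ an atom. An atomic box is a multiset of atomic sequents. An atomic rule is a triple $\langle\mathbf{A},\mathbf{S},p\rangle$ with $\mathbf{A}$ a multiset of atomic boxes, $\mathbf{S}$ an atomic box, $p$ an atom. A base is a set of atomic rules. An atom $p$ is persistent in $\mathcal{B}$ if some $\langle\varnothing,\mathbf{S},p\rangle\in\mathcal{B}$ has $\mathbf{S}\neq\varnothing$. Derivability $\vdash_{\mathcal{B}}$: (Ref) $p\vdash_{\mathcal{B}}p$; (App) if $\langle\mathbf{A},\mathbf{S},p\rangle\in\mathcal{B}$ with $\mathbf{A}=\{\mathbf{T}_1,\dots,\mathbf{T}_m\}$, and there are atomic multisets $C_1,\dots,C_n$ ($n\ge m$) and a multiset $D=\{d_{m+1},\dots,d_n\}$ of atoms persistent in $\mathcal{B}$ such that $C_i,Q\vdash_{\mathcal{B}}q$ for every $i\le m$ and every $Q\Rightarrow q\in\mathbf{T}_i$,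 $C_j\vdash_{\mathcal{B}}d_j$ for every $m<j\le n$, and $D,U\vdash_{\mathcal{B}}v$ for every $U\Rightarrow v\in\mathbf{S}$, then $C_1,\dots,C_n\vdash_{\mathcal{B}}p$. Support $\Vdash^L_{\mathcal{B}}$ (base $\mathcal{B}$, atomic multiset $L$), by induction on formulae: $\Vdash^L_{\mathcal{B}}p$ iff $L\vdash_{\mathcal{B}}p$; $\Vdash^L_{\mathcal{B}}\varphi\multimap\psi$ iff $\varphi\Vdash^L_{\mathcal{B}}\psi$; $\Vdash^L_{\mathcal{B}}\varphi\otimes\psi$ iff for all $\mathcal{C}\supseteq\mathcal{B}$, atomic $K$, atoms $p$: if $\varphi,\psi\Vdash^K_{\mathcal{C}}p$ then $\Vdash^{L,K}_{\mathcal{C}}p$; $\Vdash^L_{\mathcal{B}}1$ iff for all $\mathcal{C}\supseteq\mathcal{B}$, $K$, $p$: if $\Vdash^K_{\mathcal{C}}p$ then $\Vdash^{L,K}_{\mathcal{C}}p$; $\Vdash^L_{\mathcal{B}}\varphi\&\psi$ iff $\Vdash^L_{\mathcal{B}}\varphi$ and $\Vdash^L_{\mathcal{B}}\psi$; $\Vdash^L_{\mathcal{B}}\varphi\oplus\psi$ iff for all $\mathcal{C}\supseteq\mathcal{B}$, $K$, $p$: if $\varphi\Vdash^K_{\mathcal{C}}p$ and $\psi\Vdash^K_{\mathcal{C}}p$ then $\Vdash^{L,K}_{\mathcal{C}}p$; $\Vdash^L_{\mathcal{B}}0$ iff $\Vdash^{L,K}_{\mathcal{B}}p$ for all atoms $p$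 and atomic $K$; $\Vdash^L_{\mathcal{B}}\top$ always; $\Vdash^L_{\mathcal{B}}!\varphi$ iff for all $\mathcal{C}\supseteq\mathcal{B}$, $K$, $p$: if (for all $\mathcal{D}\supseteq\mathcal{C}$, $\Vdash^{\varnothing}_{\mathcal{D}}\varphi$ implies $\Vdash^K_{\mathcal{D}}p$) then $\Vdash^{L,K}_{\mathcal{C}}p$. For nonempty multisets: $\Vdash^L_{\mathcal{B}}\Gamma,\Delta$ iff $L=K,M$ with $\Vdash^K_{\mathcal{B}}\Gamma$ and $\Vdash^M_{\mathcal{B}}\Delta$. For a nonempty antecedent written $!\Delta,\Theta$, where $!\Delta$ collects the formulae with top-level connective $!$ (with $\Delta$ the formulae under those $!$) and $\Theta$ contains none: $!\Delta,\Theta\Vdash^L_{\mathcal{B}}\varphi$ iff for all $\mathcal{C}\supseteq\mathcal{B}$ and atomic $K$, if $\Vdash^{\varnothing}_{\mathcal{C}}\delta$ for every $\delta\in\Delta$ and $\Vdash^K_{\mathcal{C}}\Theta$ then $\Vdash^{L,K}_{\mathcal{C}}\varphi$ (when $\Theta$ is empty, $K$ is empty). An empty antecedent: $\varnothing\Vdash^L_{\mathcal{B}}\varphi$ means $\Vdash^L_{\mathcal{B}}\varphi$. A sequent $(\Gamma:\varphi)$ is valid iff $\Gamma\Vdash^{\varnothing}_{\mathcal{B}}\varphi$ for all bases $\mathcal{B}$. *)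

theory Defs
  imports Main "HOL-Library.Multiset"
begin

datatype 'a form =
    Atom 'a
  | Top
  | Zero
  | One
  | Lolli "'a form" "'a form"
  | Tensor "'a form" "'a form"
  | With "'a form" "'a form"
  | Plus "'a form" "'a form"
  | Bang "'a form"

type_synonym 'a aseq = "'a multiset \<times> 'a"
type_synonym 'a abox = "'a aseq multiset"
type_synonym 'a arule = "'a abox multiset \<times> 'a abox \<times> 'a"
type_synonym 'a base = "'a arule set"

definition persistent :: "'a base \<Rightarrow> 'a \<Rightarrow> bool" where
  "persistent B p \<longleftrightarrow> (\<exists>S. ({#}, S, p) \<in> B \<and> S \<noteq> {#})"

text \<open>In (App) the boxes T_1..T_m of the multiset A are
  listed as Ts, the multisets C_1..C_m as Cs, the multisets C_(m+1)..C_n as Es and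
  the persistent atoms d_(m+1)..d_n as ds.\<close>

inductive deriv :: "'a base \<Rightarrow> 'a multiset \<Rightarrow> 'a \<Rightarrow> bool" for B where
  Ref: "deriv B {#p#} p"
| App: "\<lbrakk> (A, S, p) \<in> B; mset Ts = A; length Cs = length Ts;
          \<forall>i<length Ts. \<forall>Qq\<in>set_mset (Ts ! i). deriv B (Cs ! i + fst Qq) (snd Qq);
          length Es = length ds; \<forall>d\<in>set ds. persistent B d;
          \<forall>j<length ds. deriv B (Es ! j) (ds ! j);
          \<forall>Uv\<in>set_mset S. deriv B (mset ds + fst Uv) (snd Uv) \<rbrakk>
        \<Longrightarrow> deriv B (sum_list Cs + sum_list Es) p"

text \<open>For the clauses whose definition refers to a
  sequent with antecedent built from one or two formulae, the antecedent clause of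
  the paper is unfolded inline: a formula !delta in the antecedent contributes the
  requirement \<Vdash>^\<emptyset>_C delta (and no resources), any other formula chi
  contributes \<Vdash>^K'_C chi for its share K' of the resources K.\<close>

fun supp :: "'a base \<Rightarrow> 'a multiset \<Rightarrow> 'a form \<Rightarrow> bool" where
  "supp B L (Atom p) = deriv B L p"
| "supp B L Top = True"
| "supp B L Zero = (\<forall>K p. deriv B (L + K) p)"
| "supp B L One =
     (\<forall>C K p. B \<subseteq> C \<longrightarrow> deriv C K p \<longrightarrow> deriv C (L + K) p)"
| "supp B L (Lolli \<phi> \<psi>) =
     (\<forall>C K. B \<subseteq> C \<longrightarrow>
        (case \<phi> of Bang \<delta> \<Rightarrow> K = {#} \<and> supp C {#} \<delta> | _ \<Rightarrow> supp C K \<phi>)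
        \<longrightarrow> supp C (L + K) \<psi>)"
| "supp B L (Tensor \<phi> \<psi>) =
     (\<forall>C K p. B \<subseteq> C \<longrightarrow>
        (\<forall>C' K'. C \<subseteq> C' \<longrightarrow>
           (\<exists>K1 K2. K' = K1 + K2
              \<and> (case \<phi> of Bang \<delta> \<Rightarrow> K1 = {#} \<and> supp C' {#} \<delta> | _ \<Rightarrow> supp C' K1 \<phi>)
              \<and> (case \<psi> of Bang \<delta> \<Rightarrow> K2 = {#} \<and> supp C' {#} \<delta> | _ \<Rightarrow> supp C' K2 \<psi>))
           \<longrightarrow> deriv C' (K + K') p)
        \<longrightarrow> deriv C (L + K) p)"
| "supp B L (With \<phi> \<psi>) = (supp B L \<phi> \<and> supp B L \<psi>)"
| "supp B L (Plus \<phi> \<psi>) =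
     (\<forall>C K p. B \<subseteq> C \<longrightarrow>
        (\<forall>C' K'. C \<subseteq> C' \<longrightarrow>
           (case \<phi> of Bang \<delta> \<Rightarrow> K' = {#} \<and> supp C' {#} \<delta> | _ \<Rightarrow> supp C' K' \<phi>)
           \<longrightarrow> deriv C' (K + K') p)
        \<longrightarrow> (\<forall>C' K'. C \<subseteq> C' \<longrightarrow>
           (case \<psi> of Bang \<delta> \<Rightarrow> K' = {#} \<and> supp C' {#} \<delta> | _ \<Rightarrow> supp C' K' \<psi>)
           \<longrightarrow> deriv C' (K + K') p)
        \<longrightarrow> deriv C (L + K) p)"
| "supp B L (Bang \<phi>) =
     (\<forall>C K p. B \<subseteq> C \<longrightarrow>
        (\<forall>D. C \<subseteq> D \<longrightarrow> supp D {#} \<phi> \<longrightarrow> deriv D K p)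
        \<longrightarrow> deriv C (L + K) p)"

text \<open>Support of a multiset of formulae: L splits into one part per formula.
  (For the empty multiset this forces L to be empty, matching the convention that
  K is empty when Theta is empty.)\<close>

fun supp_list :: "'a base \<Rightarrow> 'a multiset \<Rightarrow> 'a form list \<Rightarrow> bool" where
  "supp_list B L [] = (L = {#})"
| "supp_list B L (\<phi> # \<Gamma>) = (\<exists>K M. L = K + M \<and> supp B K \<phi> \<and> supp_list B M \<Gamma>)"

definition supp_ms :: "'a base \<Rightarrow> 'a multiset \<Rightarrow> 'a form multiset \<Rightarrow> bool" where
  "supp_ms B L \<Gamma> \<longleftrightarrow> (\<exists>xs. mset xs = \<Gamma> \<and> supp_list B L xs)"

fun is_bang :: "'a form \<Rightarrow> bool" where
  "is_bang (Bang _) = True"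
| "is_bang _ = False"

definition seq_supp :: "'a base \<Rightarrow> 'a form multiset \<Rightarrow> 'a multiset \<Rightarrow> 'a form \<Rightarrow> bool" where
  "seq_supp B \<Gamma> L \<phi> \<longleftrightarrow>
     (if \<Gamma> = {#} then supp B L \<phi>
      else (\<forall>C K. B \<subseteq> C \<longrightarrow>
              (\<forall>\<delta>. Bang \<delta> \<in># \<Gamma> \<longrightarrow> supp C {#} \<delta>)
              \<longrightarrow> supp_ms C K (filter_mset (\<lambda>\<chi>. \<not> is_bang \<chi>) \<Gamma>)
              \<longrightarrow> supp C (L + K) \<phi>))"

definition valid :: "'a form multiset \<Rightarrow> 'a form \<Rightarrow> bool" where
  "valid \<Gamma> \<phi> \<longleftrightarrow> (\<forall>B. seq_supp B \<Gamma> {#} \<phi>)"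

end

theory Submission
  imports Defs
begin

text \<open>Support is monotone in the base: atomic derivability is, since a larger base only
  offers more rules, and every other clause of support quantifies over all extensions
  of the base, which shrink as the base grows. Hence support in the empty base already
  gives support in every base.\<close>

lemma persistent_mono: "persistent B d \<Longrightarrow> B \<subseteq> C \<Longrightarrow> persistent C d"
  unfolding persistent_def by blast

lemma deriv_mono: "deriv B L p \<Longrightarrow> B \<subseteq> C \<Longrightarrow> deriv C L p"
proof (induction rule: deriv.induct)
  case (Ref p)
  show ?case by (rule deriv.Ref)
next
  case (App A S p Ts Cs Es ds)
  then show ?case
    by (intro deriv.App[of A S p C Ts Cs Es ds]) (auto intro: persistent_mono)
qed

lemma supp_mono: "supp B L \<phi> \<Longrightarrow> B \<subseteq> C \<Longrightarrow> supp C L \<phi>"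
proof (induction \<phi> arbitrary: L)
  case (Atom p)
  then show ?case by (auto intro: deriv_mono)
next
  case Zero
  then show ?case by (auto intro: deriv_mono)
next
  case (With \<phi> \<psi>)
  then show ?case by auto
qed (simp only: supp.simps; meson order_trans)+

lemma seq_supp_mono: "seq_supp B \<Gamma> L \<phi> \<Longrightarrow> B \<subseteq> C \<Longrightarrow> seq_supp C \<Gamma> L \<phi>"
  unfolding seq_supp_def by (auto intro: supp_mono)

theorem lemma4:
  fixes \<Gamma> :: "'a form multiset" and \<phi> :: "'a form"
  shows "valid \<Gamma> \<phi> \<longleftrightarrow> seq_supp {} \<Gamma> {#} \<phi>"
  unfolding valid_def using seq_supp_mono[of "{}"] by blast

end
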